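(* Let $j\in S$ be a strategy that is removed by the iterated elimination of pure strategies strictly dominated by other pure strategies. Then along every solution $x(t)$ of the IBR dynamics with initial condition $x(0)$ in the interior of $\Delta$ (all coordinates positive), $x_j(t)\to 0$ as $t\to\infty$.
   Context: Let $n\ge 2$ and consider a symmetric two-player game with strategy set $S=\{1,\dots,n\}$ and payoff matrix $A=(\pi_{ij})_{i,j\in S}$, where $\pi_{ij}\in\mathbb{R}$ is the payoff of a player using strategy $i$ against an opponent using strategy $j$. The state space is the simplex $\Delta=\{x\in\mathbb{R}^n: x_i\ge 0,\ \sum_i x_i=1\}$, where $x_i$ is the population share using strategy $i$. The imitate-the-better-realization (IBR) dynamics is the ODE on $\Delta$ $$\dot x_i = x_i\sum_{j=1}^n\sum_{k=1}^n\sum_{m=1}^n x_jx_kx_m\big(\mathbf 1\{\pi_{jk}<\pi_{im}\}-\mathbf 1\{\pi_{jk}>\pi_{im}\}\big),\quad i\in S.$$ A strategy $j$ is strictly dominated by a pure strategy $i$ (in a game with strategy set $T\subseteq S$) if $\pi_{ik}>\pi_{jk}$ for all $k\in T$. Iterated elimination removes such a $j$, restricts the game to $T\setminus\{j\}$, and repeats. *)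

theory Defs
  imports "HOL-Analysis.Analysis"
begin

text \<open>Strategies are 0,...,n-1 (the paper's 1..n shifted). Payoffs: A i j = pi_ij.
  States are functions nat => real, only coordinates below n matter.\<close>

definition std_simplex :: "nat \<Rightarrow> (nat \<Rightarrow> real) set" where
  "std_simplex n = {x. (\<forall>i<n. 0 \<le> x i) \<and> (\<Sum>i<n. x i) = 1}"

definition ibr_field :: "nat \<Rightarrow> (nat \<Rightarrow> nat \<Rightarrow> real) \<Rightarrow> (nat \<Rightarrow> real) \<Rightarrow> nat \<Rightarrow> real" where
  "ibr_field n A x i =
     x i * (\<Sum>j<n. \<Sum>k<n. \<Sum>m<n. x j * x k * x m *
        ((if A j k < A i m then 1 else 0) - (if A j k > A i m then 1 else 0)))"

definition strictly_dominated :: "(nat \<Rightarrow> nat \<Rightarrow> real) \<Rightarrow> nat set \<Rightarrow> nat \<Rightarrow> bool" where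
  "strictly_dominated A T j \<longleftrightarrow> j \<in> T \<and> (\<exists>i\<in>T. \<forall>k\<in>T. A i k > A j k)"

inductive elim_reachable :: "nat \<Rightarrow> (nat \<Rightarrow> nat \<Rightarrow> real) \<Rightarrow> nat set \<Rightarrow> bool"
  for n A where
  start: "elim_reachable n A {..<n}"
| step: "elim_reachable n A T \<Longrightarrow> strictly_dominated A T j \<Longrightarrow> elim_reachable n A (T - {j})"

definition iteratively_eliminated :: "nat \<Rightarrow> (nat \<Rightarrow> nat \<Rightarrow> real) \<Rightarrow> nat \<Rightarrow> bool" where
  "iteratively_eliminated n A j \<longleftrightarrow> j < n \<and> (\<exists>T. elim_reachable n A T \<and> j \<notin> T)"

end

(* Write G_i for the growth rate of strategy i, so that x_i' = x_i G_i. Since G_i >= -1, the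
   weighted share x_i(t) e^t never decreases; in particular an interior orbit stays interior.
   If i strictly dominates j on the surviving set T, then G_i - G_j >= x_i/n - 3 eps_T, where eps_T is
   the mass outside T. A Gronwall argument for x_j/x_i then shows that if eps_T has finite integral
   over (0, oo), so does x_j, and hence so does eps_(T - {j}). Induction along the elimination
   gives a finite integral for every eliminated x_j; since x_j e^t is nondecreasing, this forces
   x_j -> 0. *)
theory Submission
  imports Defs
begin

definition ibr_growth :: "nat \<Rightarrow> (nat \<Rightarrow> nat \<Rightarrow> real) \<Rightarrow> (nat \<Rightarrow> real) \<Rightarrow> nat \<Rightarrow> real" where
  "ibr_growth n A y i = (\<Sum>j<n. \<Sum>k<n. \<Sum>m<n. y j * y k * y m * sgn (A i m - A j k))"

definition mass_outside :: "nat \<Rightarrow> nat set \<Rightarrow> (nat \<Rightarrow> real) \<Rightarrow> real" where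
  "mass_outside n T y = (\<Sum>m\<in>{..<n} - T. y m)"

lemma ibr_field_eq_growth: "ibr_field n A y i = y i * ibr_growth n A y i"
proof -
  have "(if a < b then 1 else 0) - (if a > b then 1 else 0) = sgn (b - a)" for a b :: real
    by (simp add: sgn_if)
  then show ?thesis
    by (simp add: ibr_field_def ibr_growth_def)
qed

lemma mass_outside_eq_sum_if: "mass_outside n T y = (\<Sum>m<n. if m \<in> T then 0 else y m)"
  by (simp add: mass_outside_def sum.If_cases Diff_eq)

lemma mass_outside_remove:
  assumes "j \<in> T" "j < n"
  shows "mass_outside n (T - {j}) y = mass_outside n T y + y j"
proof -
  have "{..<n} - (T - {j}) = insert j ({..<n} - T)"
    using assms by auto
  then show ?thesis
    using assms(1) by (simp add: mass_outside_def)
qed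

lemma std_simplex_nonneg: "y \<in> std_simplex n \<Longrightarrow> i < n \<Longrightarrow> 0 \<le> y i"
  by (simp add: std_simplex_def)

lemma std_simplex_sum: "y \<in> std_simplex n \<Longrightarrow> (\<Sum>i<n. y i) = 1"
  by (simp add: std_simplex_def)

lemma std_simplex_le_one:
  assumes "y \<in> std_simplex n" "i < n"
  shows "y i \<le> 1"
proof -
  have "y i \<le> (\<Sum>i<n. y i)"
    using assms by (intro member_le_sum) (auto simp: std_simplex_nonneg)
  then show ?thesis
    using std_simplex_sum[OF assms(1)] by simp
qed

lemma std_simplex_sum_squares_ge:
  assumes "y \<in> std_simplex n"
  shows "1 / real n \<le> (\<Sum>i<n. (y i)\<^sup>2)"
proof -
  have "1 \<le> (\<Sum>i<n. (y i)\<^sup>2) * real n"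
    using sum_squared_le_sum_of_squares[of y "{..<n}"] std_simplex_sum[OF assms] by simp
  moreover have "n > 0"
    using std_simplex_sum[OF assms] by (cases n) auto
  ultimately show ?thesis
    by (simp add: divide_le_eq)
qed

lemma ibr_growth_ge:
  assumes y: "y \<in> std_simplex n"
  shows "-1 \<le> ibr_growth n A y i"
proof -
  have "(\<Sum>j<n. \<Sum>k<n. \<Sum>m<n. - (y j * y k * y m)) \<le> ibr_growth n A y i"
    unfolding ibr_growth_def
  proof (intro sum_mono)
    fix j k m assume "j \<in> {..<n}" "k \<in> {..<n}" "m \<in> {..<n}"
    then have "0 \<le> y j * y k * y m"
      using y by (simp add: std_simplex_nonneg)
    then show "- (y j * y k * y m) \<le> y j * y k * y m * sgn (A i m - A j k)"
      by (simp add: sgn_if)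
  qed
  moreover have "(\<Sum>j<n. \<Sum>k<n. \<Sum>m<n. - (y j * y k * y m)) = -1"
    using std_simplex_sum[OF y] by (simp add: sum_negf flip: sum_distrib_left)
  ultimately show ?thesis
    by simp
qed

definition realization_advantage ::
    "nat \<Rightarrow> (nat \<Rightarrow> nat \<Rightarrow> real) \<Rightarrow> (nat \<Rightarrow> real) \<Rightarrow> nat \<Rightarrow> nat \<Rightarrow> nat \<Rightarrow> real" where
  "realization_advantage n A y i j m =
     (\<Sum>J<n. \<Sum>K<n. y J * y K * (sgn (A i m - A J K) - sgn (A j m - A J K)))"

lemma ibr_growth_diff_eq:
  "ibr_growth n A y i - ibr_growth n A y j = (\<Sum>m<n. y m * realization_advantage n A y i j m)"
proof -
  have "ibr_growth n A y i - ibr_growth n A y j =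
      (\<Sum>J<n. \<Sum>K<n. \<Sum>m<n. y m * (y J * y K * (sgn (A i m - A J K) - sgn (A j m - A J K))))"
    by (simp add: ibr_growth_def sum_subtractf algebra_simps)
  also have "\<dots> = (\<Sum>m<n. y m * realization_advantage n A y i j m)"
    unfolding realization_advantage_def sum_distrib_left
    by (subst sum.swap, subst (2) sum.swap) (rule refl)
  finally show ?thesis .
qed

lemma realization_advantage_ge:
  assumes y: "y \<in> std_simplex n"
  shows "-2 \<le> realization_advantage n A y i j m"
proof -
  have "-2 = (\<Sum>J<n. \<Sum>K<n. y J * y K) * -2"
    using std_simplex_sum[OF y] by (simp flip: sum_distrib_left)
  also have "\<dots> = (\<Sum>J<n. \<Sum>K<n. y J * y K * -2)"
    by (simp only: sum_distrib_right)
  also have "\<dots> \<le> realization_advantage n A y i j m"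
    unfolding realization_advantage_def using std_simplex_nonneg[OF y]
    by (intro sum_mono mult_left_mono) (auto simp: sgn_if)
  finally show ?thesis .
qed

lemma realization_advantage_ge_if_better:
  assumes y: "y \<in> std_simplex n" and "i < n" "m < n" and better: "A j m < A i m"
  shows "y i * y m \<le> realization_advantage n A y i j m"
proof -
  define d where "d J K = sgn (A i m - A J K) - sgn (A j m - A J K)" for J K
  have d_nonneg: "0 \<le> d J K" for J K
    using better unfolding d_def by (auto simp: sgn_if)
  have "d i m = 1"
    using better unfolding d_def by (simp add: sgn_if)
  then have "y i * y m = y i * y m * d i m"
    by simp
  also have "\<dots> \<le> (\<Sum>K<n. y i * y K * d i K)"
    using assms d_nonneg by (intro member_le_sum) (auto simp: std_simplex_nonneg)
  also have "\<dots> \<le> (\<Sum>J<n. \<Sum>K<n. y J * y K * d J K)"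
    using assms d_nonneg by (intro member_le_sum[of i] sum_nonneg) (auto simp: std_simplex_nonneg)
  finally show ?thesis
    unfolding realization_advantage_def d_def .
qed

lemma ibr_growth_gap_ge:
  assumes y: "y \<in> std_simplex n" and T: "T \<subseteq> {..<n}" "i \<in> T"
    and dom: "\<forall>k\<in>T. A j k < A i k"
  shows "y i / real n - 3 * mass_outside n T y \<le> ibr_growth n A y i - ibr_growth n A y j"
proof -
  have i: "i < n"
    using T by auto
  have nonneg: "\<And>m. m < n \<Longrightarrow> 0 \<le> y m"
    using y by (simp add: std_simplex_nonneg)
  have term_ge: "y i * (y m)\<^sup>2 - 3 * (if m \<in> T then 0 else y m)
      \<le> y m * realization_advantage n A y i j m" if m: "m < n" for m
  proof (cases "m \<in> T")
    case True
    then have "y m * (y i * y m) \<le> y m * realization_advantage n A y i j m"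
      using realization_advantage_ge_if_better[OF y i m] dom nonneg m by (intro mult_left_mono) auto
    then show ?thesis
      using True by (simp add: power2_eq_square algebra_simps)
  next
    case False
    have "y m * -2 \<le> y m * realization_advantage n A y i j m"
      using realization_advantage_ge[OF y] nonneg m by (intro mult_left_mono) auto
    moreover have "y i * (y m * y m) \<le> 1 * (y m * 1)"
      using nonneg std_simplex_le_one[OF y] m i by (intro mult_mono) auto
    ultimately show ?thesis
      using False by (simp add: power2_eq_square)
  qed
  have "y i / real n \<le> y i * (\<Sum>m<n. (y m)\<^sup>2)"
    using std_simplex_sum_squares_ge[OF y] nonneg[OF i]
    by (metis mult_left_mono times_divide_eq_right mult_1_right)
  then have "y i / real n - 3 * mass_outside n T y
      \<le> (\<Sum>m<n. y i * (y m)\<^sup>2 - 3 * (if m \<in> T then 0 else y m))"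
    by (simp add: mass_outside_eq_sum_if sum_subtractf sum_distrib_left)
  also have "\<dots> \<le> ibr_growth n A y i - ibr_growth n A y j"
    unfolding ibr_growth_diff_eq using term_ge by (intro sum_mono) simp
  finally show ?thesis .
qed

(* For nonnegative f this says that f has finite integral over (0, oo), phrased through a primitive
   E of a majorant D so that no integrability of f is needed. *)
definition finite_upper_integral :: "(real \<Rightarrow> real) \<Rightarrow> bool" where
  "finite_upper_integral f \<longleftrightarrow>
     (\<exists>E D B. \<forall>t>0. (E has_real_derivative D t) (at t) \<and> f t \<le> D t \<and> E t \<le> B)"

lemma finite_upper_integral_mono:
  assumes "finite_upper_integral g" "\<And>t. 0 < t \<Longrightarrow> f t \<le> g t"
  shows "finite_upper_integral f"
  using assms unfolding finite_upper_integral_def by (meson order_trans)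

lemma finite_upper_integral_add:
  assumes "finite_upper_integral f" "finite_upper_integral g"
  shows "finite_upper_integral (\<lambda>t. f t + g t)"
proof -
  obtain E D B where "\<forall>t>0. (E has_real_derivative D t) (at t) \<and> f t \<le> D t \<and> E t \<le> B"
    using assms(1) unfolding finite_upper_integral_def by blast
  moreover obtain E' D' B' where "\<forall>t>0. (E' has_real_derivative D' t) (at t) \<and> g t \<le> D' t \<and> E' t \<le> B'"
    using assms(2) unfolding finite_upper_integral_def by blast
  ultimately show ?thesis
    unfolding finite_upper_integral_def
    by (intro exI[of _ "\<lambda>t. E t + E' t"] exI[of _ "\<lambda>t. D t + D' t"] exI[of _ "B + B'"])
      (auto intro: DERIV_add add_mono)
qed

lemma finite_upper_integral_by_gronwall:
  fixes u U h g :: "real \<Rightarrow> real"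
  assumes h: "finite_upper_integral h" and a: "0 \<le> a"
    and u: "\<And>t. 0 < t \<Longrightarrow> (u has_real_derivative U t) (at t)"
    and u_nonneg: "\<And>t. 0 < t \<Longrightarrow> 0 \<le> u t"
    and g_nonneg: "\<And>t. 0 < t \<Longrightarrow> 0 \<le> g t"
    and decay: "\<And>t. 0 < t \<Longrightarrow> U t \<le> a * h t * u t - g t"
  shows "finite_upper_integral g"
proof -
  obtain E D B where E: "\<And>t. 0 < t \<Longrightarrow> (E has_real_derivative D t) (at t)"
    and h_le: "\<And>t. 0 < t \<Longrightarrow> h t \<le> D t" and E_le: "\<And>t. 0 < t \<Longrightarrow> E t \<le> B"
    using h unfolding finite_upper_integral_def by blast
  \<comment> \<open>The weight \<open>exp (- a * E t)\<close> absorbs the growth term \<open>a * h t * u t\<close>.\<close>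
  define v where "v t = - exp (a * B) * (u t * exp (- a * E t))" for t
  define V where "V t = exp (a * B - a * E t) * (a * D t * u t - U t)" for t
  have "(v has_real_derivative V t) (at t)" if "0 < t" for t
    unfolding v_def[abs_def]
    by (rule derivative_eq_intros u E that refl)+ (simp add: V_def exp_diff exp_minus field_simps)
  moreover have "g t \<le> V t" if t: "0 < t" for t
  proof -
    have "a * h t * u t \<le> a * D t * u t"
      using a h_le[OF t] u_nonneg[OF t] by (intro mult_right_mono mult_left_mono) auto
    then have g_le: "g t \<le> a * D t * u t - U t"
      using decay[OF t] by simp
    have "1 \<le> exp (a * B - a * E t)"
      using a E_le[OF t] by (simp add: mult_left_mono)
    then have "1 * (a * D t * u t - U t) \<le> V t"
      unfolding V_def using g_le g_nonneg[OF t] by (intro mult_right_mono) auto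
    then show ?thesis
      using g_le by simp
  qed
  moreover have "v t \<le> 0" if "0 < t" for t
    using u_nonneg[OF that] by (simp add: v_def)
  ultimately show ?thesis
    unfolding finite_upper_integral_def by blast
qed

lemma increasing_bounded_tendsto_SUP:
  fixes E :: "real \<Rightarrow> real"
  assumes mono: "\<And>s t. 0 < s \<Longrightarrow> s \<le> t \<Longrightarrow> E s \<le> E t"
    and bounded: "\<And>t. 0 < t \<Longrightarrow> E t \<le> B"
  shows "(E \<longlongrightarrow> (SUP t\<in>{0<..}. E t)) at_top"
proof (rule increasing_tendsto)
  have bdd: "bdd_above (E ` {0<..})"
    using bounded by (intro bdd_aboveI[of _ B]) auto
  show "\<forall>\<^sub>F t in at_top. E t \<le> (SUP t\<in>{0<..}. E t)"
    using eventually_gt_at_top[of 0] by eventually_elim (auto intro: cSUP_upper bdd)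
  fix l assume "l < (SUP t\<in>{0<..}. E t)"
  then obtain s where s: "0 < s" "l < E s"
    using less_cSUP_iff[OF _ bdd] by auto
  show "\<forall>\<^sub>F t in at_top. l < E t"
    using eventually_ge_at_top[of s] by (rule eventually_mono) (use mono s in force)
qed

lemma tendsto_zero_if_finite_upper_integral:
  fixes g :: "real \<Rightarrow> real"
  assumes "finite_upper_integral g" and g_nonneg: "\<And>t. 0 < t \<Longrightarrow> 0 \<le> g t"
    and g_exp_mono: "\<And>s t. 0 < s \<Longrightarrow> s \<le> t \<Longrightarrow> g s * exp s \<le> g t * exp t"
  shows "(g \<longlongrightarrow> 0) at_top"
proof -
  obtain E D B where E: "\<And>t. 0 < t \<Longrightarrow> (E has_real_derivative D t) (at t)"
    and g_le: "\<And>t. 0 < t \<Longrightarrow> g t \<le> D t" and E_le: "\<And>t. 0 < t \<Longrightarrow> E t \<le> B"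
    using assms(1) unfolding finite_upper_integral_def by blast
  have E_mono: "E s \<le> E t" if "0 < s" "s \<le> t" for s t
  proof (rule DERIV_nonneg_imp_increasing_open[OF that(2)])
    fix r assume "s < r" "r < t"
    with that have "0 < r" by simp
    then show "\<exists>y. (E has_real_derivative y) (at r) \<and> 0 \<le> y"
      using E g_le g_nonneg by (meson order_trans)
  next
    show "continuous_on {s..t} E"
      using that E by (intro continuous_at_imp_continuous_on ballI DERIV_isCont[OF E]) auto
  qed
  have "(E \<longlongrightarrow> (SUP t\<in>{0<..}. E t)) at_top"
    using E_mono E_le by (rule increasing_bounded_tendsto_SUP)
  then have "((\<lambda>t. E (t + 1)) \<longlongrightarrow> (SUP t\<in>{0<..}. E t)) at_top"
    by (rule filterlim_compose)
      (use filterlim_tendsto_add_at_top[OF tendsto_const[of 1] filterlim_ident] in \<open>simp add: add.commute\<close>)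
  then have increment: "((\<lambda>t. exp 1 * (E (t + 1) - E t)) \<longlongrightarrow> 0) at_top"
    using \<open>(E \<longlongrightarrow> _) at_top\<close> by (intro tendsto_eq_intros) auto
  have g_bound: "g t \<le> exp 1 * (E (t + 1) - E t)" if t: "0 < t" for t
  proof -
    obtain r where r: "t < r" "r < t + 1" "E (t + 1) - E t = D r"
      using MVT2[of t "t + 1" E D] E t by force
    have "g t * exp t \<le> g r * exp r"
      using g_exp_mono t r by simp
    then have "g t \<le> g r * exp (r - t)"
      by (simp add: exp_diff pos_le_divide_eq)
    also have "\<dots> \<le> D r * exp 1"
      using g_le[of r] g_nonneg[of r] t r by (intro mult_mono) auto
    finally show ?thesis
      using r by (simp add: mult.commute)
  qed
  have "\<forall>\<^sub>F t in at_top. 0 \<le> g t"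
    using eventually_gt_at_top[of 0] by (rule eventually_mono) (rule g_nonneg)
  moreover have "\<forall>\<^sub>F t in at_top. g t \<le> exp 1 * (E (t + 1) - E t)"
    using eventually_gt_at_top[of 0] by (rule eventually_mono) (rule g_bound)
  ultimately show ?thesis
    using increment by (rule tendsto_sandwich[OF _ _ tendsto_const])
qed

locale ibr_orbit =
  fixes n :: nat and A :: "nat \<Rightarrow> nat \<Rightarrow> real" and x :: "real \<Rightarrow> nat \<Rightarrow> real"
  assumes in_simplex: "\<And>t. 0 \<le> t \<Longrightarrow> x t \<in> std_simplex n"
    and has_derivative_within: "\<And>t i. 0 \<le> t \<Longrightarrow> i < n \<Longrightarrow>
      ((\<lambda>s. x s i) has_real_derivative ibr_field n A (x t) i) (at t within {0..})"
    and initial_interior: "\<And>i. i < n \<Longrightarrow> 0 < x 0 i"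
begin

lemma coordinate_nonneg: "0 \<le> t \<Longrightarrow> i < n \<Longrightarrow> 0 \<le> x t i"
  using std_simplex_nonneg[OF in_simplex] .

lemma has_derivative_growth:
  assumes "0 < t" "i < n"
  shows "((\<lambda>s. x s i) has_real_derivative x t i * ibr_growth n A (x t) i) (at t)"
proof -
  have "at t within {0..} = at t"
    using assms by (intro at_within_interior) simp
  then show ?thesis
    using has_derivative_within[of t i] assms by (simp add: ibr_field_eq_growth)
qed

lemma continuous_on_coordinate: "i < n \<Longrightarrow> continuous_on {0..} (\<lambda>s. x s i)"
  unfolding continuous_on_eq_continuous_within
  using has_derivative_within by (blast intro: DERIV_continuous)

lemma exp_weighted_mono:
  assumes "0 \<le> s" "s \<le> t" "i < n"
  shows "x s i * exp s \<le> x t i * exp t"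
proof (rule DERIV_nonneg_imp_increasing_open[OF assms(2)])
  fix r assume "s < r" "r < t"
  with assms have r: "0 < r" by simp
  have "0 \<le> x r i * exp r * (ibr_growth n A (x r) i + 1)"
    using coordinate_nonneg[of r i] r assms(3) ibr_growth_ge[OF in_simplex, of r A i] by simp
  then show "\<exists>y. ((\<lambda>s. x s i * exp s) has_real_derivative y) (at r) \<and> 0 \<le> y"
    using DERIV_mult[OF has_derivative_growth[OF r assms(3)] DERIV_exp]
    by (intro exI conjI) (auto simp: algebra_simps)
next
  show "continuous_on {s..t} (\<lambda>s. x s i * exp s)"
    using continuous_on_coordinate[OF assms(3)] assms
    by (intro continuous_intros) (auto intro: continuous_on_subset)
qed

lemma coordinate_pos:
  assumes "0 \<le> t" "i < n"
  shows "0 < x t i"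
proof -
  have "0 < x t i * exp t"
    using exp_weighted_mono[of 0 t i] initial_interior[of i] assms by simp
  then show ?thesis
    by (simp add: zero_less_mult_iff)
qed

lemma dominated_finite_upper_integral:
  assumes T: "T \<subseteq> {..<n}" "i \<in> T" and j: "j < n" and dom: "\<forall>k\<in>T. A j k < A i k"
    and outside: "finite_upper_integral (\<lambda>t. mass_outside n T (x t))"
  shows "finite_upper_integral (\<lambda>t. x t j)"
proof (rule finite_upper_integral_by_gronwall[OF outside, of 3])
  have i: "i < n"
    using T by auto
  define G where "G t k = ibr_growth n A (x t) k" for t k
  define u where "u t = real n * (x t j / x t i)" for t
  show "(u has_real_derivative u t * (G t j - G t i)) (at t)" if t: "0 < t" for t
  proof -
    have xi: "x t i \<noteq> 0"
      using coordinate_pos[of t i] t i by simp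
    from DERIV_cmult[OF DERIV_divide[OF has_derivative_growth[OF t j] has_derivative_growth[OF t i] xi]]
    show ?thesis
      unfolding u_def[abs_def] G_def by (rule DERIV_cong) (simp add: xi field_simps power2_eq_square)
  qed
  show u_nonneg: "0 \<le> u t" if "0 < t" for t
    using coordinate_nonneg[of t j] coordinate_nonneg[of t i] that i j by (simp add: u_def)
  show "0 \<le> x t j" if "0 < t" for t
    using coordinate_nonneg[of t j] that j by simp
  show "u t * (G t j - G t i) \<le> 3 * mass_outside n T (x t) * u t - x t j" if t: "0 < t" for t
  proof -
    have "x t i / real n - 3 * mass_outside n T (x t) \<le> G t i - G t j"
      unfolding G_def using ibr_growth_gap_ge[OF in_simplex T dom] t by simp
    then have "u t * (G t j - G t i) \<le> u t * (3 * mass_outside n T (x t) - x t i / real n)"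
      using u_nonneg[OF t] by (intro mult_left_mono) auto
    also have "\<dots> = 3 * mass_outside n T (x t) * u t - x t j"
      using coordinate_pos[of t i] t i by (simp add: u_def field_simps)
    finally show ?thesis .
  qed
qed simp

lemma elim_reachable_finite_upper_integral:
  assumes "elim_reachable n A T"
  shows "T \<subseteq> {..<n} \<and> finite_upper_integral (\<lambda>t. mass_outside n T (x t))"
  using assms
proof (induction rule: elim_reachable.induct)
  case start
  show ?case
    unfolding finite_upper_integral_def mass_outside_def by force
next
  case (step T j)
  then have T: "T \<subseteq> {..<n}" and outside: "finite_upper_integral (\<lambda>t. mass_outside n T (x t))"
    by auto
  from step.hyps(2) obtain i where "j \<in> T" "i \<in> T" "\<forall>k\<in>T. A j k < A i k"
    unfolding strictly_dominated_def by blast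
  moreover from this have "finite_upper_integral (\<lambda>t. x t j)"
    using T outside by (intro dominated_finite_upper_integral) auto
  ultimately show ?case
    using T outside by (simp add: mass_outside_remove subset_iff finite_upper_integral_add)
qed

lemma eliminated_tendsto_zero:
  assumes "iteratively_eliminated n A j"
  shows "((\<lambda>t. x t j) \<longlongrightarrow> 0) at_top"
proof (rule tendsto_zero_if_finite_upper_integral)
  obtain T where T: "elim_reachable n A T" "j \<notin> T" and j: "j < n"
    using assms unfolding iteratively_eliminated_def by blast
  have "finite_upper_integral (\<lambda>t. mass_outside n T (x t))"
    using elim_reachable_finite_upper_integral[OF T(1)] ..
  moreover have "x t j \<le> mass_outside n T (x t)" if "0 < t" for t
    unfolding mass_outside_def using T(2) j coordinate_nonneg that
    by (intro member_le_sum) auto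
  ultimately show "finite_upper_integral (\<lambda>t. x t j)"
    by (rule finite_upper_integral_mono)
  show "0 \<le> x t j" if "0 < t" for t
    using coordinate_nonneg that j by simp
  show "x s j * exp s \<le> x t j * exp t" if "0 < s" "s \<le> t" for s t
    using exp_weighted_mono that j by simp
qed

end

theorem proposition2:
  fixes n :: nat and A :: "nat \<Rightarrow> nat \<Rightarrow> real" and x :: "real \<Rightarrow> nat \<Rightarrow> real" and j :: nat
  assumes "n \<ge> 2"
    and "iteratively_eliminated n A j"
    and "\<forall>t\<ge>0. x t \<in> std_simplex n"
    and "\<forall>t\<ge>0. \<forall>i<n. ((\<lambda>s. x s i) has_real_derivative ibr_field n A (x t) i) (at t within {0..})"
    and "\<forall>i<n. x 0 i > 0"
  shows "((\<lambda>t. x t j) \<longlongrightarrow> 0) at_top"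
proof -
  interpret ibr_orbit n A x
    using assms(3-5) by unfold_locales auto
  show ?thesis
    using assms(2) by (rule eliminated_tendsto_zero)
qed

end
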